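(* Let $G$ be a finite abelian group, $\Phi$ a $3$-cocycle on $G$ with values in $\mathbbm{k}^*$, and $g_1,g_2,g_3\in G$. Then the following three identities are mutually equivalent: $\widetilde{\Phi}_{g_1}(g_2,g_3)=\widetilde{\Phi}_{g_1}(g_3,g_2)$; $\widetilde{\Phi}_{g_2}(g_1,g_3)=\widetilde{\Phi}_{g_2}(g_3,g_1)$; $\widetilde{\Phi}_{g_3}(g_1,g_2)=\widetilde{\Phi}_{g_3}(g_2,g_1)$.
   Context: For $g\in G$, $\widetilde{\Phi}_g(x,y)=\frac{\Phi(g,x,y)\Phi(x,y,g)}{\Phi(x,g,y)}$. *)

theory Defs
  imports Main
begin

text \<open>A finite abelian group G is modelled as a type of class ab_group_add with finite
  (group operation written additively).\<close>

definition three_cocycle :: "('g::ab_group_add \<Rightarrow> 'g \<Rightarrow> 'g \<Rightarrow> 'k::field) \<Rightarrow> bool" where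
  "three_cocycle \<Phi> \<longleftrightarrow>
     (\<forall>x y z. \<Phi> x y z \<noteq> 0) \<and>
     (\<forall>a b c d. \<Phi> (a + b) c d * \<Phi> a b (c + d) = \<Phi> a b c * \<Phi> a (b + c) d * \<Phi> b c d)"

definition phi_tilde :: "('g \<Rightarrow> 'g \<Rightarrow> 'g \<Rightarrow> 'k::field) \<Rightarrow> 'g \<Rightarrow> 'g \<Rightarrow> 'g \<Rightarrow> 'k" where
  "phi_tilde \<Phi> g x y = \<Phi> g x y * \<Phi> x y g / \<Phi> x g y"

end

theory Submission
  imports Defs
begin

text \<open>Clearing denominators, each identity says that the product of \<open>\<Phi>\<close> over the three
  cyclic orderings of \<open>g\<^sub>1, g\<^sub>2, g\<^sub>3\<close> equals the product over the three other orderings;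
  this condition is symmetric in the \<open>g\<^sub>i\<close>.\<close>

definition cyclic_product :: "('g \<Rightarrow> 'g \<Rightarrow> 'g \<Rightarrow> 'k::field) \<Rightarrow> 'g \<Rightarrow> 'g \<Rightarrow> 'g \<Rightarrow> 'k" where
  "cyclic_product \<Phi> a b c = \<Phi> a b c * \<Phi> b c a * \<Phi> c a b"

lemma cyclic_product_rotate: "cyclic_product \<Phi> a b c = cyclic_product \<Phi> b c a"
  unfolding cyclic_product_def by (simp add: ac_simps)

lemma phi_tilde_commute_iff_cyclic_product:
  fixes \<Phi> :: "'g \<Rightarrow> 'g \<Rightarrow> 'g \<Rightarrow> 'k::field"
  assumes nonzero: "\<And>x y z. \<Phi> x y z \<noteq> 0"
  shows "phi_tilde \<Phi> g x y = phi_tilde \<Phi> g y x \<longleftrightarrow> cyclic_product \<Phi> g x y = cyclic_product \<Phi> g y x"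
  unfolding phi_tilde_def cyclic_product_def using nonzero
  by (simp add: field_simps; auto simp: ac_simps)

lemma three_cocycle_nonzero: "three_cocycle \<Phi> \<Longrightarrow> \<Phi> x y z \<noteq> 0"
  unfolding three_cocycle_def by blast

theorem lemma4p6:
  fixes \<Phi> :: "'g::{ab_group_add, finite} \<Rightarrow> 'g \<Rightarrow> 'g \<Rightarrow> 'k::field"
    and g1 g2 g3 :: 'g
  assumes "three_cocycle \<Phi>"
  shows "(phi_tilde \<Phi> g1 g2 g3 = phi_tilde \<Phi> g1 g3 g2 \<longleftrightarrow> phi_tilde \<Phi> g2 g1 g3 = phi_tilde \<Phi> g2 g3 g1)
       \<and> (phi_tilde \<Phi> g2 g1 g3 = phi_tilde \<Phi> g2 g3 g1 \<longleftrightarrow> phi_tilde \<Phi> g3 g1 g2 = phi_tilde \<Phi> g3 g2 g1)"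
proof -
  note commute_iff = phi_tilde_commute_iff_cyclic_product[OF three_cocycle_nonzero[OF assms]]
  have "cyclic_product \<Phi> g2 g3 g1 = cyclic_product \<Phi> g1 g2 g3"
    and "cyclic_product \<Phi> g3 g1 g2 = cyclic_product \<Phi> g1 g2 g3"
    and "cyclic_product \<Phi> g2 g1 g3 = cyclic_product \<Phi> g1 g3 g2"
    and "cyclic_product \<Phi> g3 g2 g1 = cyclic_product \<Phi> g1 g3 g2"
    by (metis cyclic_product_rotate)+
  then show ?thesis
    by (auto simp: commute_iff)
qed

end
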